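(* Let $\hbar^2\ll\varepsilon_\hbar\ll\hbar$. Let $\Lambda_1\ne\Lambda_2$ in $\mathcal{L}_1$ and let $k(\hbar)=n_1(\hbar)\vec v_{\Lambda_1}+m_1(\hbar)\vec v_{\Lambda_1}^\perp$ and $l(\hbar)=n_2(\hbar)\vec v_{\Lambda_2}+m_2(\hbar)\vec v_{\Lambda_2}^\perp$ be two distinct sequences in $\mathbb{Z}^2$ ($n_j,m_j$ integers) with $\|k(\hbar)\|=\|l(\hbar)\|=\hbar^{-1}$, and suppose that for $j=1,2$ there is $\omega_j\in\mathbb{R}$ with $2\pi m_j(\hbar)\hbar^2\varepsilon_\hbar^{-1}\to\omega_j$. Set $\psi_\hbar=\frac1{\sqrt2}(e_{k(\hbar)}+e_{l(\hbar)})$. Then the limits $\mathbf{F}^0_\Lambda$ of the distributions $a\mapsto\langle\psi_\hbar,\operatorname{Op}_\hbar(\mathcal{I}_\Lambda(a)(x,\hbar H_\Lambda(\xi)/\varepsilon_\hbar))\psi_\hbar\rangle$ on $\mathcal{C}^\infty_c(\mathbb{T}^2\times\mathbb{R})$ are: $\mathbf{F}^0_\Lambda=\frac12\,dx\otimes\delta_{\omega_1L_{\Lambda_1}}(\eta)$ if $\Lambda=\mathbb{Z}\vec v_{\Lambda_1}^\perp$, $\mathbf{F}^0_\Lambda=\frac12\,dx\otimes\delta_{\omega_2L_{\Lambda_2}}(\eta)$ if $\Lambda=\mathbb{Z}\vec v_{\Lambda_2}^\perp$, and $\mathbf{F}^0_\Lambda=0$ otherwise.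
   Context: $\mathbb{T}^2=\mathbb{R}^2/\mathbb{Z}^2$, $e_k(x)=e^{2i\pi k\cdot x}$, $\langle u,v\rangle=\int\overline{u}v$. Standard quantization: $\operatorname{Op}_\hbar(a)e_k=a(x,2\pi\hbar k)e_k$. $\mathcal{L}_1$: primitive rank-one sublattices $\Lambda=\mathbb{Z}\vec v_\Lambda$ of $\mathbb{Z}^2$, with fixed generator $\vec v_\Lambda$, $\vec v_\Lambda^\perp$ its rotation by $+\pi/2$, $L_\Lambda=\|\vec v_\Lambda\|$, $H_\Lambda(\xi)=\langle\xi,\vec v_\Lambda\rangle/L_\Lambda$, $\mathcal{I}_\Lambda(a)(x,\eta)=\frac1{L_\Lambda}\int_0^{L_\Lambda}a(x+t\vec v_\Lambda^\perp/L_\Lambda,\eta)dt$. For $\Lambda=\mathbb{Z}\vec v_{\Lambda_j}^\perp$ the generator is taken to be $\vec v_{\Lambda_j}^\perp$. $dx$ is Lebesgue measure on $\mathbb{T}^2$. *)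

theory Defs
  imports "HOL-Analysis.Analysis"
begin

(* Points of R^2 (and of T^2 via 1-periodic functions) are real \<times> real;
   lattice points of Z^2 are int \<times> int. *)

definition ivec :: "int \<times> int \<Rightarrow> real \<times> real" where
  "ivec k = (real_of_int (fst k), real_of_int (snd k))"

definition inorm :: "int \<times> int \<Rightarrow> real" where
  "inorm k = norm (ivec k)"

definition rot :: "int \<times> int \<Rightarrow> int \<times> int" where
  "rot v = (- snd v, fst v)"

definition lcomb :: "int \<Rightarrow> int \<times> int \<Rightarrow> int \<Rightarrow> int \<times> int \<Rightarrow> int \<times> int" where
  "lcomb n v m w = (n * fst v + m * fst w, n * snd v + m * snd w)"

(* generator of a primitive rank-one sublattice *)
definition primitive :: "int \<times> int \<Rightarrow> bool" where
  "primitive v \<longleftrightarrow> gcd (fst v) (snd v) = 1"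

definition ek :: "int \<times> int \<Rightarrow> real \<times> real \<Rightarrow> complex" where
  "ek k x = cis (2 * pi * (ivec k \<bullet> x))"

definition Llen :: "int \<times> int \<Rightarrow> real" where
  "Llen v = inorm v"

definition Hfun :: "int \<times> int \<Rightarrow> real \<times> real \<Rightarrow> real" where
  "Hfun v \<xi> = (\<xi> \<bullet> ivec v) / Llen v"

definition Iav :: "int \<times> int \<Rightarrow> (real \<times> real \<Rightarrow> real \<Rightarrow> complex) \<Rightarrow> real \<times> real \<Rightarrow> real \<Rightarrow> complex" where
  "Iav v a x \<eta> = (1 / Llen v) *\<^sub>R
     integral {0..Llen v} (\<lambda>t. a (x + (t / Llen v) *\<^sub>R ivec (rot v)) \<eta>)"

definition trig :: "(int \<times> int \<Rightarrow> complex) \<Rightarrow> real \<times> real \<Rightarrow> complex" where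
  "trig c x = (\<Sum>k | c k \<noteq> 0. c k * ek k x)"

(* Op_h(b) applied to a trigonometric polynomial: Op_h(b) e_k = b(x, 2 pi h k) e_k *)
definition Op :: "real \<Rightarrow> (real \<times> real \<Rightarrow> real \<times> real \<Rightarrow> complex) \<Rightarrow> (int \<times> int \<Rightarrow> complex)
                  \<Rightarrow> real \<times> real \<Rightarrow> complex" where
  "Op h b c x = (\<Sum>k | c k \<noteq> 0. c k * b x ((2 * pi * h) *\<^sub>R ivec k) * ek k x)"

definition ip :: "(real \<times> real \<Rightarrow> complex) \<Rightarrow> (real \<times> real \<Rightarrow> complex) \<Rightarrow> complex" where
  "ip u w = integral (cbox (0,0) (1,1)) (\<lambda>x. cnj (u x) * w x)"

definition psi_coeff :: "int \<times> int \<Rightarrow> int \<times> int \<Rightarrow> int \<times> int \<Rightarrow> complex" where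
  "psi_coeff k l j = (if j = k \<or> j = l then complex_of_real (1 / sqrt 2) else 0)"

definition partial_deriv :: "'a::euclidean_space \<Rightarrow> ('a \<Rightarrow> 'b::real_normed_vector) \<Rightarrow> 'a \<Rightarrow> 'b" where
  "partial_deriv u f x = frechet_derivative f (at x) u"

fun Ck :: "nat \<Rightarrow> ('a::euclidean_space \<Rightarrow> 'b::real_normed_vector) \<Rightarrow> bool" where
  "Ck 0 f = continuous_on UNIV f"
| "Ck (Suc n) f = (f differentiable_on UNIV \<and> (\<forall>i\<in>Basis. Ck n (partial_deriv i f)))"

definition smooth :: "('a::euclidean_space \<Rightarrow> 'b::real_normed_vector) \<Rightarrow> bool" where
  "smooth f \<longleftrightarrow> (\<forall>n. Ck n f)"

definition test_fun :: "(real \<times> real \<Rightarrow> real \<Rightarrow> complex) \<Rightarrow> bool" where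
  "test_fun a \<longleftrightarrow> smooth (\<lambda>(x, \<eta>). a x \<eta>)
     \<and> (\<forall>x \<eta> j. a (x + ivec j) \<eta> = a x \<eta>)
     \<and> (\<exists>R. \<forall>x \<eta>. \<bar>\<eta>\<bar> > R \<longrightarrow> a x \<eta> = 0)"

definition dist_val :: "real \<Rightarrow> real \<Rightarrow> int \<times> int \<Rightarrow> int \<times> int \<Rightarrow> int \<times> int
                        \<Rightarrow> (real \<times> real \<Rightarrow> real \<Rightarrow> complex) \<Rightarrow> complex" where
  "dist_val h \<epsilon> k l v a =
     ip (trig (psi_coeff k l))
        (Op h (\<lambda>x \<xi>. Iav v a x (h * Hfun v \<xi> / \<epsilon>)) (psi_coeff k l))"

end

theory Submission
  imports Defs "HOL-Analysis.Kronecker_Approximation_Theorem"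
begin

(* Expanding psi = (e_k + e_l)/sqrt 2, the quantity to compute is the integral over the torus of
   (1/2) (I(a)(x, eta_k) (1 + e_{k-l}) + I(a)(x, eta_l) (1 + e_{l-k})), where eta_j is the value of
   h H(2 pi h j) / eps.  Averaging along the direction v^perp preserves the integral over the torus
   and kills every Fourier mode e_j with j . v^perp <> 0.
   Since h m_1 -> 0, the unit vector h k tends to the line through v_1, and likewise h l to the line
   through v_2.  Hence eta_k stays bounded (and tends to omega_1 L_1) only for the direction
   v = v_1^perp, and for all other primitive v it escapes every compact set, where a vanishes.  For
   v = v_1^perp the mode e_{k-l} is killed, because (h k . v_1)^2 -> |v_1|^2 whereas
   (h l . v_1)^2 -> (v_1 . v_2)^2 / |v_2|^2, which is smaller since v_1, v_2 are not parallel. *)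

lemma periodic_shift_of_int:
  fixes f :: "real \<Rightarrow> 'a"
  assumes per: "\<And>t. f (t + 1) = f t"
  shows "f (t + of_int n) = f t"
proof -
  have shift_nat: "f (t + of_nat m) = f t" for m t
  proof (induction m)
    case (Suc m)
    have "f (t + of_nat (Suc m)) = f (t + of_nat m + 1)" by (simp add: algebra_simps)
    with Suc show ?case by (simp only: per)
  qed simp
  show ?thesis
  proof (cases "n \<ge> 0")
    case True
    then show ?thesis using shift_nat[of t "nat n"] by simp
  next
    case False
    then have "t = (t + of_int n) + of_nat (nat (- n))" by simp
    then show ?thesis using shift_nat[of "t + of_int n" "nat (- n)"] by simp
  qed
qed

lemma integral_periodic_shift:
  fixes f :: "real \<Rightarrow> 'a::banach"
  assumes cont: "continuous_on UNIV f" and per: "\<And>t. f (t + 1) = f t"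
  shows "integral {0..1} (\<lambda>t. f (t + c)) = integral {0..1} f"
proof -
  define r where "r = c - of_int \<lfloor>c\<rfloor>"
  have r: "0 \<le> r" "r < 1" unfolding r_def by linarith+
  have int: "f integrable_on {s..t}" for s t
    using cont continuous_on_subset integrable_continuous_interval by blast
  have "f (t + c) = f (t + r)" for t
    using periodic_shift_of_int[of f "t + r" "\<lfloor>c\<rfloor>", OF per] by (simp add: r_def)
  then have "integral {0..1} (\<lambda>t. f (t + c)) = integral {0..1} (\<lambda>t. f (t + r))"
    by simp
  also have "\<dots> = integral {r..1} f + integral {1..1+r} f"
    using integral_shift_real_ivl[where a=r and c=r and b="1+r" and f=f] Henstock_Kurzweil_Integration.integral_combine[of r 1 "1+r" f] r int by simp
  also have "integral {1..1+r} f = integral {0..r} f"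
    using integral_shift_real_ivl[where a=1 and c=1 and b="1+r" and f=f] by (simp add: per)
  also have "integral {r..1} f + integral {0..r} f = integral {0..1} f"
    using Henstock_Kurzweil_Integration.integral_combine[of 0 r 1 f] r int by (simp add: add.commute)
  finally show ?thesis .
qed

lemma integral_torus_shift:
  fixes g :: "real \<times> real \<Rightarrow> 'a::banach"
  assumes cont: "continuous_on UNIV g" and per: "\<And>x j. g (x + ivec j) = g x"
  shows "integral (cbox (0,0) (1,1)) (\<lambda>x. g (x + c)) = integral (cbox (0,0) (1,1)) g"
proof -
  obtain c1 c2 where c: "c = (c1, c2)" by force
  have per1: "g (x + 1, y) = g (x, y)" and per2: "g (x, y + 1) = g (x, y)" for x y
    using per[of "(x, y)" "(1, 0)"] per[of "(x, y)" "(0, 1)"] by (simp_all add: ivec_def)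
  have cont_on: "continuous_on S g" for S
    using cont continuous_on_subset by blast
  define H where "H s = integral {0..1} (\<lambda>y. g (s, y))" for s
  have H_cont: "continuous_on UNIV H"
    unfolding H_def using integral_continuous_on_param[of UNIV 0 1 "\<lambda>s y. g (s, y)"] cont_on
    by (simp add: case_prod_beta)
  have "integral (cbox (0,0) (1,1)) (\<lambda>x. g (x + c))
      = integral {0..1} (\<lambda>s. integral {0..1} (\<lambda>y. g (s + c1, y + c2)))"
    using integral_prod_continuous[of 0 0 1 1 "\<lambda>x. g (x + c)"]
    by (simp add: c continuous_on_compose2[OF cont] continuous_intros)
  also have "\<dots> = integral {0..1} (\<lambda>s. H (s + c1))"
    unfolding H_def
    by (intro integral_cong integral_periodic_shift[of "\<lambda>y. g (_ + c1, y)"])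
       (auto intro!: continuous_on_compose2[OF cont] continuous_intros simp: per2)
  also have "\<dots> = integral {0..1} H"
    by (rule integral_periodic_shift[OF H_cont]) (simp add: H_def per1)
  also have "\<dots> = integral (cbox (0,0) (1,1)) g"
    using integral_prod_continuous[OF cont_on, of 0 0 1 1] by (simp add: H_def[abs_def])
  finally show ?thesis .
qed

lemma integral_cis_multiple_period:
  assumes L: "L > 0" and n: "n \<noteq> 0"
  shows "integral {0..L} (\<lambda>t. cis (2 * pi * of_int n * t / L)) = 0"
proof -
  define \<beta> where "\<beta> = \<i> * complex_of_real (2 * pi * of_int n / L)"
  have "\<beta> \<noteq> 0" using L n by (simp add: \<beta>_def)
  moreover have "cis (2 * pi * of_int n * t / L) = exp (\<beta> * complex_of_real t)" for t
    by (simp add: cis_conv_exp \<beta>_def algebra_simps)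
  moreover have "exp (\<beta> * complex_of_real L) = 1"
    using L cis_multiple_2pi[of "of_int n"] by (simp add: cis_conv_exp \<beta>_def algebra_simps)
  ultimately show ?thesis
    using integral_exp[of L \<beta>] L by simp
qed

lemma ivec_inner: "ivec j \<bullet> ivec i = of_int (fst j * fst i + snd j * snd i)"
  by (simp add: ivec_def)

lemma ivec_diff: "ivec (j - i) = ivec j - ivec i"
  by (simp add: ivec_def)

lemma ivec_rot_rot: "ivec (rot (rot v)) = - ivec v"
  by (simp add: ivec_def rot_def)

lemma inner_ivec_rot_self: "ivec v \<bullet> ivec (rot v) = 0"
  by (simp add: ivec_def rot_def)

lemma inorm_rot: "inorm (rot v) = inorm v"
  by (simp add: inorm_def ivec_def rot_def norm_Pair)

lemma inorm_power2: "(inorm v)\<^sup>2 = ivec v \<bullet> ivec v"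
  by (simp add: inorm_def power2_norm_eq_inner)

lemma inorm_pos: "v \<noteq> 0 \<Longrightarrow> inorm v > 0"
  by (auto simp: inorm_def ivec_def prod_eq_iff)

lemma primitive_nonzero: "primitive v \<Longrightarrow> v \<noteq> 0"
  by (auto simp: primitive_def)

lemma primitive_rot: "primitive v \<Longrightarrow> primitive (rot v)"
  by (simp add: primitive_def rot_def gcd.commute)

lemma rot_inj: "rot u = rot v \<longleftrightarrow> u = v"
  by (auto simp: rot_def prod_eq_iff)

lemma rot_uminus: "rot (- v) = - rot v"
  by (simp add: rot_def)

lemma inner_power2_add_inner_rot_power2:
  "(ivec u \<bullet> ivec v)\<^sup>2 + (ivec u \<bullet> ivec (rot v))\<^sup>2 = (inorm u)\<^sup>2 * (inorm v)\<^sup>2"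
  unfolding inorm_power2 by (simp add: ivec_def rot_def power2_eq_square algebra_simps)

lemma primitive_inner_nonzero:
  assumes v: "primitive v" and u: "primitive u" and "u \<noteq> rot v" "u \<noteq> - rot v"
  shows "ivec u \<bullet> ivec v \<noteq> 0"
proof
  obtain a b where vab: "v = (a, b)" by force
  obtain x y where uxy: "u = (x, y)" by force
  assume "ivec u \<bullet> ivec v = 0"
  then have "x * a + y * b = 0"
    unfolding ivec_inner vab uxy of_int_eq_0_iff by simp
  then have e: "x * a = - (y * b)" by simp
  have cab: "coprime a b" and cxy: "coprime x y"
    using v u by (simp_all add: primitive_def vab uxy coprime_iff_gcd_eq_1)
  have "a dvd y * b" using e by (metis dvd_minus_iff dvd_triv_right)
  then have ay: "a dvd y" using cab by (simp add: coprime_dvd_mult_left_iff)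
  have "b dvd x * a" using e by (metis dvd_minus_iff dvd_triv_right mult.commute)
  then have bx: "b dvd x" using cab coprime_commute by (metis coprime_dvd_mult_left_iff)
  have "y dvd x * a" using e by (metis dvd_minus_iff dvd_triv_left)
  then have ya: "y dvd a" using cxy coprime_commute by (metis coprime_dvd_mult_right_iff)
  have "x dvd y * b" using e by (metis dvd_minus_iff dvd_triv_left mult.commute)
  then have xb: "x dvd b" using cxy by (metis coprime_dvd_mult_right_iff coprime_commute mult.commute)
  have ay: "\<bar>a\<bar> = \<bar>y\<bar>" by (rule zdvd_antisym_abs[OF ay ya])
  have bx: "\<bar>b\<bar> = \<bar>x\<bar>" by (rule zdvd_antisym_abs[OF bx xb])
  have "a \<noteq> 0 \<or> b \<noteq> 0" using primitive_nonzero[OF v] by (auto simp: vab zero_prod_def)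
  then have "(x = - b \<and> y = a) \<or> (x = b \<and> y = - a)"
    using ay bx e by (smt (verit) mult_minus_left mult.commute mult_cancel_left abs_if)
  then show False using assms(3,4) by (auto simp: rot_def vab uxy)
qed

lemma primitive_inner_power2_less:
  assumes v: "primitive v" and u: "primitive u" and "u \<noteq> v" "u \<noteq> - v"
  shows "(ivec u \<bullet> ivec v)\<^sup>2 < (inorm u)\<^sup>2 * (inorm v)\<^sup>2"
proof -
  have "ivec u \<bullet> ivec (rot v) \<noteq> 0"
    using primitive_inner_nonzero[OF primitive_rot[OF v] u] assms(3,4)
    by (auto simp: rot_def prod_eq_iff)
  then show ?thesis
    using inner_power2_add_inner_rot_power2[of u v] by (smt (verit) zero_less_power2)
qed

lemma ek_add: "ek j (x + y) = ek j x * ek j y"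
  by (simp add: ek_def inner_add_right distrib_left cis_mult)

lemma ek_ivec: "ek j (ivec i) = 1"
  using cis_multiple_2pi[of "of_int (fst j * fst i + snd j * snd i)"] by (simp add: ek_def ivec_inner)

lemma ek_zero: "ek 0 x = 1"
  by (simp add: ek_def ivec_def flip: zero_prod_def)

lemma cnj_ek_mult: "cnj (ek k x) * ek l x = ek (l - k) x"
  by (cases x) (simp add: ek_def ivec_def cis_cnj cis_mult algebra_simps)

lemma continuous_on_ek: "continuous_on S (ek j)"
  unfolding ek_def by (intro continuous_intros)

definition eta :: "real \<Rightarrow> real \<Rightarrow> int \<times> int \<Rightarrow> int \<times> int \<Rightarrow> real" where
  "eta h \<epsilon> v k = h * Hfun v ((2 * pi * h) *\<^sub>R ivec k) / \<epsilon>"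

lemma cnj_psi_mult_Op_psi:
  assumes "k \<noteq> l"
  shows "cnj (trig (psi_coeff k l) x) * Op h b (psi_coeff k l) x
     = (1/2) * (b x ((2 * pi * h) *\<^sub>R ivec k) * (1 + ek (k - l) x)
              + b x ((2 * pi * h) *\<^sub>R ivec l) * (1 + ek (l - k) x))"
proof -
  define c where "c = complex_of_real (1 / sqrt 2)"
  define B where "B j = b x ((2 * pi * h) *\<^sub>R ivec j)" for j
  have cc: "cnj c * c = 1/2"
    by (simp add: c_def flip: of_real_mult)
  have psi: "{j. psi_coeff k l j \<noteq> 0} = {k, l}" "psi_coeff k l k = c" "psi_coeff k l l = c"
    by (auto simp: psi_coeff_def c_def)
  have "cnj (trig (psi_coeff k l) x) * Op h b (psi_coeff k l) x
      = (cnj c * c) * (B k * (cnj (ek k x) * ek k x) + B l * (cnj (ek k x) * ek l x)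
          + B k * (cnj (ek l x) * ek k x) + B l * (cnj (ek l x) * ek l x))"
    using assms by (simp add: trig_def Op_def psi B_def algebra_simps)
  also have "\<dots> = (1/2) * (B k * (1 + ek (k - l) x) + B l * (1 + ek (l - k) x))"
    unfolding cc cnj_ek_mult by (simp add: ek_zero algebra_simps)
  finally show ?thesis by (simp add: B_def)
qed

lemma dist_val_eq_integral:
  assumes "k \<noteq> l"
  shows "dist_val h \<epsilon> k l v a = integral (cbox (0,0) (1,1)) (\<lambda>x. (1/2) *
     (Iav v a x (eta h \<epsilon> v k) * (1 + ek (k - l) x) + Iav v a x (eta h \<epsilon> v l) * (1 + ek (l - k) x)))"
  by (simp add: dist_val_def ip_def cnj_psi_mult_Op_psi[OF assms] eta_def)

lemma dist_val_swap: "dist_val h \<epsilon> k l v a = dist_val h \<epsilon> l k v a"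
proof -
  have "psi_coeff k l = psi_coeff l k" by (auto simp: psi_coeff_def fun_eq_iff)
  then show ?thesis by (simp add: dist_val_def)
qed

lemma dist_val_eq_0:
  assumes "k \<noteq> l" "\<And>x. a x (eta h \<epsilon> v k) = 0" "\<And>x. a x (eta h \<epsilon> v l) = 0"
  shows "dist_val h \<epsilon> k l v a = 0"
  using assms by (simp add: dist_val_eq_integral Iav_def)

locale periodic_symbol =
  fixes a :: "real \<times> real \<Rightarrow> real \<Rightarrow> complex"
  assumes continuous: "continuous_on UNIV (\<lambda>(x, \<eta>). a x \<eta>)"
    and periodic: "\<And>x \<eta> j. a (x + ivec j) \<eta> = a x \<eta>"
begin

lemma continuous_on_symbol:
  "continuous_on S f \<Longrightarrow> continuous_on S g \<Longrightarrow> continuous_on S (\<lambda>p. a (f p) (g p))"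
  using continuous_on_compose2[OF continuous, of S "\<lambda>p. (f p, g p)"]
  by (auto intro!: continuous_intros)

lemma continuous_on_Iav: "continuous_on S (\<lambda>x. Iav v a x \<eta>)"
proof -
  have "continuous_on UNIV
      (\<lambda>x. integral (cbox 0 (Llen v)) (\<lambda>t. a (x + (t / Llen v) *\<^sub>R ivec (rot v)) \<eta>))"
    by (rule integral_continuous_on_param)
       (auto intro!: continuous_on_symbol continuous_intros simp: case_prod_beta divide_inverse)
  then show ?thesis unfolding Iav_def
    by (auto intro!: continuous_intros intro: continuous_on_subset)
qed

lemma continuous_on_integral_torus: "continuous_on S (\<lambda>\<eta>. integral (cbox (0,0) (1,1)) (\<lambda>x. a x \<eta>))"
  by (rule continuous_on_subset[OF integral_continuous_on_param])
     (auto intro!: continuous_on_symbol continuous_intros simp: case_prod_beta)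

(* Fubini, then a translation x \<mapsto> x + t w of the torus moves the whole phase of e_j outside. *)
lemma integral_ek_Iav:
  assumes v: "v \<noteq> 0"
  defines "L \<equiv> Llen v" and "w \<equiv> ivec (rot v)"
  shows "integral (cbox (0,0) (1,1)) (\<lambda>x. ek j x * Iav v a x \<eta>)
       = of_real (1 / L) * integral {0..L} (\<lambda>t. ek j (- ((t / L) *\<^sub>R w)))
           * integral (cbox (0,0) (1,1)) (\<lambda>x. ek j x * a x \<eta>)"
proof -
  have L: "L > 0" using inorm_pos[OF v] by (simp add: L_def Llen_def)
  define F where "F x t = ek j x * a (x + (t / L) *\<^sub>R w) \<eta>" for x t
  define G where "G y = ek j y * a y \<eta>" for y
  have G_cont: "continuous_on UNIV G"
    unfolding G_def by (auto intro!: continuous_on_symbol continuous_intros continuous_on_ek)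
  have G_per: "G (x + ivec i) = G x" for x i
    unfolding G_def by (simp add: ek_add ek_ivec periodic)
  have F_cont: "continuous_on (cbox ((0,0), 0) ((1,1), L)) (\<lambda>(x, t). F x t)"
    unfolding F_def using L
    by (auto intro!: continuous_on_symbol continuous_intros
        continuous_on_ek[THEN continuous_on_compose2] simp: case_prod_beta)
  have F_shift: "F x t = ek j (- ((t / L) *\<^sub>R w)) * G (x + (t / L) *\<^sub>R w)" for x t
    using ek_add[of j "x + (t / L) *\<^sub>R w" "- ((t / L) *\<^sub>R w)"] by (simp add: F_def G_def)
  have "integral (cbox (0,0) (1,1)) (\<lambda>x. ek j x * Iav v a x \<eta>)
      = of_real (1 / L) * integral (cbox (0,0) (1,1)) (\<lambda>x. integral (cbox 0 L) (F x))"
    by (simp add: Iav_def L_def w_def F_def[abs_def] scaleR_conv_of_real algebra_simps)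
  also have "integral (cbox (0,0) (1,1)) (\<lambda>x. integral (cbox 0 L) (F x))
      = integral (cbox 0 L) (\<lambda>t. integral (cbox (0,0) (1,1)) (\<lambda>x. F x t))"
    by (rule integral_swap_continuous[OF F_cont])
  also have "\<dots> = integral {0..L} (\<lambda>t. ek j (- ((t / L) *\<^sub>R w)) * integral (cbox (0,0) (1,1)) G)"
    unfolding F_shift integral_mult_right
    using integral_torus_shift[OF G_cont G_per] by simp
  finally show ?thesis by (simp add: G_def[abs_def])
qed

lemma integral_Iav:
  assumes "v \<noteq> 0"
  shows "integral (cbox (0,0) (1,1)) (\<lambda>x. Iav v a x \<eta>) = integral (cbox (0,0) (1,1)) (\<lambda>x. a x \<eta>)"
proof -
  have L: "Llen v > 0" using inorm_pos[OF assms] by (simp add: Llen_def)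
  show ?thesis
    using integral_ek_Iav[OF assms, of 0 \<eta>] L by (simp add: ek_zero scaleR_conv_of_real)
qed

lemma integral_ek_Iav_eq_0:
  assumes v: "v \<noteq> 0" and j: "ivec j \<bullet> ivec (rot v) \<noteq> 0"
  shows "integral (cbox (0,0) (1,1)) (\<lambda>x. ek j x * Iav v a x \<eta>) = 0"
proof -
  define n where "n = - (fst j * fst (rot v) + snd j * snd (rot v))"
  have "n \<noteq> 0" using j unfolding ivec_inner of_int_eq_0_iff n_def by simp
  moreover have "ek j (- ((t / Llen v) *\<^sub>R ivec (rot v))) = cis (2 * pi * of_int n * t / Llen v)" for t
    by (simp add: ek_def n_def ivec_inner inner_minus_right)
       (rule arg_cong[where f=cis], simp add: algebra_simps minus_divide_left)
  ultimately show ?thesis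
    using integral_ek_Iav[OF v, of j \<eta>] integral_cis_multiple_period inorm_pos[OF v]
    by (simp add: Llen_def)
qed

lemma dist_val_eq_half_integral:
  assumes v: "v \<noteq> 0" and kl: "k \<noteq> l" and vanish: "\<And>x. a x (eta h \<epsilon> v l) = 0"
    and nonorth: "ivec (k - l) \<bullet> ivec (rot v) \<noteq> 0"
  shows "dist_val h \<epsilon> k l v a = (1/2) * integral (cbox (0,0) (1,1)) (\<lambda>x. a x (eta h \<epsilon> v k))"
proof -
  let ?A = "\<lambda>x. Iav v a x (eta h \<epsilon> v k)"
  have int: "?A integrable_on cbox (0,0) (1,1)"
    "(\<lambda>x. ek (k - l) x * ?A x) integrable_on cbox (0,0) (1,1)"
    by (intro integrable_continuous continuous_intros continuous_on_ek continuous_on_Iav)+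
  have "Iav v a x (eta h \<epsilon> v l) = 0" for x
    by (simp add: Iav_def vanish)
  then have "dist_val h \<epsilon> k l v a
      = integral (cbox (0,0) (1,1)) (\<lambda>x. (1/2) * (?A x + ek (k - l) x * ?A x))"
    using kl by (simp add: dist_val_eq_integral algebra_simps)
  also have "\<dots> = (1/2) * (integral (cbox (0,0) (1,1)) ?A
      + integral (cbox (0,0) (1,1)) (\<lambda>x. ek (k - l) x * ?A x))"
    using integral_add[OF int] by simp
  finally show ?thesis
    using integral_Iav[OF v] integral_ek_Iav_eq_0[OF v nonorth] by simp
qed

end

lemma test_fun_periodic_symbol: "test_fun a \<Longrightarrow> periodic_symbol a"
  unfolding test_fun_def smooth_def periodic_symbol_def by (metis Ck.simps(1))

locale scaled_lattice_seq =
  fixes h \<epsilon> :: "nat \<Rightarrow> real" and v :: "int \<times> int" and n m :: "nat \<Rightarrow> int"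
    and k :: "nat \<Rightarrow> int \<times> int" and \<omega> :: real
  assumes h_pos: "\<And>i. h i > 0" and eps_pos: "\<And>i. \<epsilon> i > 0"
    and eps_h_lim: "(\<lambda>i. \<epsilon> i / h i) \<longlonglongrightarrow> 0"
    and v: "primitive v"
    and k_def: "\<And>i. k i = lcomb (n i) v (m i) (rot v)"
    and k_norm: "\<And>i. inorm (k i) = 1 / h i"
    and omega_lim: "(\<lambda>i. 2 * pi * real_of_int (m i) * (h i)\<^sup>2 / \<epsilon> i) \<longlonglongrightarrow> \<omega>"
begin

definition X :: "nat \<Rightarrow> real" where "X i = h i * real_of_int (n i)"
definition Y :: "nat \<Rightarrow> real" where "Y i = h i * real_of_int (m i)"

lemma inorm_v_pos: "inorm v > 0"
  using inorm_pos[OF primitive_nonzero[OF v]] .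

lemma scaled_k: "h i *\<^sub>R ivec (k i) = X i *\<^sub>R ivec v + Y i *\<^sub>R ivec (rot v)"
  by (simp add: k_def lcomb_def ivec_def X_def Y_def algebra_simps)

lemma Y_lim: "Y \<longlonglongrightarrow> 0"
proof -
  have "(\<lambda>i. (2 * pi * real_of_int (m i) * (h i)\<^sup>2 / \<epsilon> i) * (\<epsilon> i / h i) / (2 * pi)) \<longlonglongrightarrow> \<omega> * 0 / (2 * pi)"
    by (intro tendsto_intros omega_lim eps_h_lim) simp
  moreover have "(2 * pi * real_of_int (m i) * (h i)\<^sup>2 / \<epsilon> i) * (\<epsilon> i / h i) / (2 * pi) = Y i" for i
    using h_pos[of i] eps_pos[of i] by (simp add: Y_def field_simps power2_eq_square)
  ultimately show ?thesis by simp
qed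

lemma X_Y_sphere: "((X i)\<^sup>2 + (Y i)\<^sup>2) * (inorm v)\<^sup>2 = 1"
proof -
  have "(h i * inorm (k i))\<^sup>2 = 1" using k_norm[of i] h_pos[of i] by simp
  also have "(h i * inorm (k i))\<^sup>2 = (h i *\<^sub>R ivec (k i)) \<bullet> (h i *\<^sub>R ivec (k i))"
    unfolding power_mult_distrib inorm_power2 by (simp add: power2_eq_square)
  finally show ?thesis
    unfolding scaled_k
    by (simp add: inner_add_left inner_add_right inner_ivec_rot_self inner_commute[of "ivec (rot v)"]
        inorm_power2[symmetric] inorm_rot power2_eq_square algebra_simps)
qed

lemma abs_X_le: "\<bar>X i\<bar> \<le> 1 / inorm v"
proof -
  have "(X i * inorm v)\<^sup>2 = 1 - (Y i * inorm v)\<^sup>2"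
    using X_Y_sphere[of i] by (simp add: power_mult_distrib algebra_simps)
  then have "\<bar>X i * inorm v\<bar> \<le> 1" using abs_square_le_1 by fastforce
  then show ?thesis using inorm_v_pos by (simp add: abs_mult field_simps)
qed

lemma X_Y_lim: "(\<lambda>i. X i * Y i) \<longlonglongrightarrow> 0"
proof (rule Lim_null_comparison)
  show "\<forall>\<^sub>F i in sequentially. norm (X i * Y i) \<le> 1 / inorm v * \<bar>Y i\<bar>"
    by (intro always_eventually allI)
       (use mult_right_mono[OF abs_X_le abs_ge_zero] in \<open>simp add: abs_mult\<close>)
  show "(\<lambda>i. 1 / inorm v * \<bar>Y i\<bar>) \<longlonglongrightarrow> 0"
    by (rule tendsto_mult_right_zero[OF tendsto_rabs_zero[OF Y_lim]])
qed

lemma inner_scaled_k_power2_lim: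
  "(\<lambda>i. (h i * (ivec (k i) \<bullet> u))\<^sup>2) \<longlonglongrightarrow> (ivec v \<bullet> u)\<^sup>2 / (inorm v)\<^sup>2"
proof -
  define p q where "p = ivec v \<bullet> u" and "q = ivec (rot v) \<bullet> u"
  have expand: "(h i * (ivec (k i) \<bullet> u))\<^sup>2
      = p\<^sup>2 / (inorm v)\<^sup>2 + 2 * p * q * (X i * Y i) + (q\<^sup>2 - p\<^sup>2) * (Y i)\<^sup>2" for i
  proof -
    have "h i * (ivec (k i) \<bullet> u) = X i * p + Y i * q"
      using arg_cong[OF scaled_k[of i], of "\<lambda>z. z \<bullet> u"] by (simp add: p_def q_def inner_add_left)
    then have "(h i * (ivec (k i) \<bullet> u))\<^sup>2
        = p\<^sup>2 * ((X i)\<^sup>2 + (Y i)\<^sup>2) + 2 * p * q * (X i * Y i) + (q\<^sup>2 - p\<^sup>2) * (Y i)\<^sup>2"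
      by (simp add: power2_eq_square algebra_simps)
    moreover have "(X i)\<^sup>2 + (Y i)\<^sup>2 = 1 / (inorm v)\<^sup>2"
      using X_Y_sphere[of i] inorm_v_pos by (simp add: field_simps)
    ultimately show ?thesis by simp
  qed
  have "(\<lambda>i. p\<^sup>2 / (inorm v)\<^sup>2 + 2 * p * q * (X i * Y i) + (q\<^sup>2 - p\<^sup>2) * (Y i)\<^sup>2)
      \<longlonglongrightarrow> p\<^sup>2 / (inorm v)\<^sup>2 + 2 * p * q * 0 + (q\<^sup>2 - p\<^sup>2) * 0\<^sup>2"
    by (intro tendsto_intros X_Y_lim Y_lim)
  then show ?thesis unfolding expand p_def by simp
qed

lemma eta_rot_eq: "eta (h i) (\<epsilon> i) (rot v) (k i) = 2 * pi * real_of_int (m i) * (h i)\<^sup>2 / \<epsilon> i * Llen v"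
proof -
  have "ivec (k i) \<bullet> ivec (rot v) = real_of_int (m i) * (inorm v)\<^sup>2"
    unfolding inorm_power2 by (simp add: k_def lcomb_def rot_def ivec_def algebra_simps)
  then show ?thesis using inorm_v_pos
    by (simp add: eta_def Hfun_def Llen_def inorm_rot power2_eq_square)
qed

lemma eta_rot_lim: "(\<lambda>i. eta (h i) (\<epsilon> i) (rot v) (k i)) \<longlonglongrightarrow> \<omega> * Llen v"
  unfolding eta_rot_eq by (intro tendsto_intros omega_lim)

(* h k . u stays away from 0, so eta is of the order of h / eps. *)
lemma abs_eta_at_top:
  assumes uv: "ivec u \<bullet> ivec v \<noteq> 0"
  shows "filterlim (\<lambda>i. \<bar>eta (h i) (\<epsilon> i) u (k i)\<bar>) at_top sequentially"
proof -
  have "u \<noteq> 0" using uv by (auto simp: ivec_def)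
  then have Lu: "inorm u > 0" by (rule inorm_pos)
  have eta_eq: "\<bar>eta (h i) (\<epsilon> i) u (k i)\<bar>
      = (2 * pi / inorm u * \<bar>h i * (ivec (k i) \<bullet> ivec u)\<bar>) * inverse (\<epsilon> i / h i)" for i
    using h_pos[of i] eps_pos[of i] Lu by (simp add: eta_def Hfun_def Llen_def abs_mult field_simps)
  have "(\<lambda>i. sqrt ((h i * (ivec (k i) \<bullet> ivec u))\<^sup>2)) \<longlonglongrightarrow> sqrt ((ivec v \<bullet> ivec u)\<^sup>2 / (inorm v)\<^sup>2)"
    by (intro tendsto_real_sqrt inner_scaled_k_power2_lim)
  then have "(\<lambda>i. 2 * pi / inorm u * \<bar>h i * (ivec (k i) \<bullet> ivec u)\<bar>)
      \<longlonglongrightarrow> 2 * pi / inorm u * sqrt ((ivec v \<bullet> ivec u)\<^sup>2 / (inorm v)\<^sup>2)"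
    by (intro tendsto_intros) simp
  moreover have "2 * pi / inorm u * sqrt ((ivec v \<bullet> ivec u)\<^sup>2 / (inorm v)\<^sup>2) > 0"
    using Lu inorm_v_pos uv by (simp add: inner_commute)
  moreover have "filterlim (\<lambda>i. inverse (\<epsilon> i / h i)) at_top sequentially"
    by (rule filterlim_inverse_at_top[OF eps_h_lim]) (use h_pos eps_pos in simp)
  ultimately show ?thesis
    unfolding eta_eq by (rule filterlim_tendsto_pos_mult_at_top)
qed

end

lemma test_fun_eventually_vanishes:
  assumes "test_fun a" and "filterlim (\<lambda>i. \<bar>g i\<bar>) at_top F"
  shows "\<forall>\<^sub>F i in F. \<forall>x. a x (g i) = 0"
proof -
  obtain R where R: "\<And>x \<eta>. R < \<bar>\<eta>\<bar> \<Longrightarrow> a x \<eta> = 0"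
    using assms(1) unfolding test_fun_def by blast
  from assms(2) have "\<forall>\<^sub>F i in F. R < \<bar>g i\<bar>"
    unfolding filterlim_at_top_dense by blast
  then show ?thesis by (rule eventually_mono) (use R in blast)
qed

lemma eventually_inner_diff_nonzero:
  assumes K: "scaled_lattice_seq h \<epsilon> v1 n1 m1 k \<omega>1" and L: "scaled_lattice_seq h \<epsilon> v2 n2 m2 l \<omega>2"
    and ne: "v2 \<noteq> v1" "v2 \<noteq> - v1"
  shows "\<forall>\<^sub>F i in sequentially. ivec (k i - l i) \<bullet> ivec v1 \<noteq> 0"
proof -
  interpret K: scaled_lattice_seq h \<epsilon> v1 n1 m1 k \<omega>1 by (rule K)
  interpret L: scaled_lattice_seq h \<epsilon> v2 n2 m2 l \<omega>2 by (rule L)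
  have lim: "(\<lambda>i. (h i * (ivec (k i) \<bullet> ivec v1))\<^sup>2 - (h i * (ivec (l i) \<bullet> ivec v1))\<^sup>2)
      \<longlonglongrightarrow> (ivec v1 \<bullet> ivec v1)\<^sup>2 / (inorm v1)\<^sup>2 - (ivec v2 \<bullet> ivec v1)\<^sup>2 / (inorm v2)\<^sup>2"
    by (intro tendsto_diff K.inner_scaled_k_power2_lim L.inner_scaled_k_power2_lim)
  have "(ivec v2 \<bullet> ivec v1)\<^sup>2 / (inorm v2)\<^sup>2 < (ivec v1 \<bullet> ivec v1)\<^sup>2 / (inorm v1)\<^sup>2"
    using primitive_inner_power2_less[OF K.v L.v ne] K.inorm_v_pos L.inorm_v_pos
    by (simp add: inorm_power2[symmetric] field_simps power2_eq_square)
  then have "\<forall>\<^sub>F i in sequentially.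
      0 < (h i * (ivec (k i) \<bullet> ivec v1))\<^sup>2 - (h i * (ivec (l i) \<bullet> ivec v1))\<^sup>2"
    using order_tendstoD(1)[OF lim, of 0] by simp
  then show ?thesis
    by (rule eventually_mono) (auto simp: ivec_diff inner_diff_left)
qed

lemma dist_val_rot_tendsto:
  assumes K: "scaled_lattice_seq h \<epsilon> v1 n1 m1 k \<omega>1" and L: "scaled_lattice_seq h \<epsilon> v2 n2 m2 l \<omega>2"
    and ne: "v2 \<noteq> v1" "v2 \<noteq> - v1" and kl: "\<And>i. k i \<noteq> l i" and a: "test_fun a"
  shows "(\<lambda>i. dist_val (h i) (\<epsilon> i) (k i) (l i) (rot v1) a)
          \<longlonglongrightarrow> (1/2) * integral (cbox (0,0) (1,1)) (\<lambda>x. a x (\<omega>1 * Llen v1))"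
proof -
  interpret K: scaled_lattice_seq h \<epsilon> v1 n1 m1 k \<omega>1 by (rule K)
  interpret L: scaled_lattice_seq h \<epsilon> v2 n2 m2 l \<omega>2 by (rule L)
  interpret periodic_symbol a by (rule test_fun_periodic_symbol[OF a])
  have rot_v1: "rot v1 \<noteq> 0" using primitive_nonzero[OF primitive_rot[OF K.v]] .
  have "ivec (rot v1) \<bullet> ivec v2 \<noteq> 0"
    using primitive_inner_nonzero[OF L.v primitive_rot[OF K.v]] ne
    by (metis rot_inj rot_uminus minus_minus)
  then have "\<forall>\<^sub>F i in sequentially. \<forall>x. a x (eta (h i) (\<epsilon> i) (rot v1) (l i)) = 0"
    by (intro test_fun_eventually_vanishes[OF a] L.abs_eta_at_top)
  then have ev: "\<forall>\<^sub>F i in sequentially. (1/2) * integral (cbox (0,0) (1,1)) (\<lambda>x. a x (eta (h i) (\<epsilon> i) (rot v1) (k i)))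
              = dist_val (h i) (\<epsilon> i) (k i) (l i) (rot v1) a"
    using eventually_inner_diff_nonzero[OF K L ne]
  proof eventually_elim
    case (elim i)
    show ?case
      by (rule dist_val_eq_half_integral[OF rot_v1 kl, symmetric])
         (use elim(1) in blast, use elim(2) in \<open>simp add: ivec_rot_rot\<close>)
  qed
  have lim: "(\<lambda>i. (1/2) * integral (cbox (0,0) (1,1)) (\<lambda>x. a x (eta (h i) (\<epsilon> i) (rot v1) (k i))))
      \<longlonglongrightarrow> (1/2) * integral (cbox (0,0) (1,1)) (\<lambda>x. a x (\<omega>1 * Llen v1))"
    using continuous_on_integral_torus[of UNIV]
    by (intro tendsto_intros isCont_tendsto_compose[OF _ K.eta_rot_lim])
       (simp add: continuous_on_eq_continuous_at)
  show ?thesis by (rule Lim_transform_eventually[OF lim ev])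
qed

lemma dist_val_tendsto_0:
  assumes K: "scaled_lattice_seq h \<epsilon> v1 n1 m1 k \<omega>1" and L: "scaled_lattice_seq h \<epsilon> v2 n2 m2 l \<omega>2"
    and kl: "\<And>i. k i \<noteq> l i" and a: "test_fun a"
    and v: "primitive v" "v \<noteq> rot v1" "v \<noteq> - rot v1" "v \<noteq> rot v2" "v \<noteq> - rot v2"
  shows "(\<lambda>i. dist_val (h i) (\<epsilon> i) (k i) (l i) v a) \<longlonglongrightarrow> 0"
proof -
  interpret K: scaled_lattice_seq h \<epsilon> v1 n1 m1 k \<omega>1 by (rule K)
  interpret L: scaled_lattice_seq h \<epsilon> v2 n2 m2 l \<omega>2 by (rule L)
  have "\<forall>\<^sub>F i in sequentially. \<forall>x. a x (eta (h i) (\<epsilon> i) v (k i)) = 0"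
    using primitive_inner_nonzero[OF K.v v(1,2,3)]
    by (intro test_fun_eventually_vanishes[OF a] K.abs_eta_at_top)
  moreover have "\<forall>\<^sub>F i in sequentially. \<forall>x. a x (eta (h i) (\<epsilon> i) v (l i)) = 0"
    using primitive_inner_nonzero[OF L.v v(1,4,5)]
    by (intro test_fun_eventually_vanishes[OF a] L.abs_eta_at_top)
  ultimately have "\<forall>\<^sub>F i in sequentially. dist_val (h i) (\<epsilon> i) (k i) (l i) v a = 0"
  proof eventually_elim
    case (elim i)
    show ?case by (rule dist_val_eq_0[OF kl]) (use elim in blast)+
  qed
  then show ?thesis by (rule tendsto_eventually)
qed

theorem proposition3p3:
  fixes h \<epsilon> :: "nat \<Rightarrow> real"
    and v1 v2 :: "int \<times> int"
    and n1 m1 n2 m2 :: "nat \<Rightarrow> int"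
    and k l :: "nat \<Rightarrow> int \<times> int"
    and \<omega>1 \<omega>2 :: real
  assumes h_pos: "\<And>n. h n > 0" and h_lim: "h \<longlonglongrightarrow> 0"
    and eps_pos: "\<And>n. \<epsilon> n > 0"
    and scale1: "(\<lambda>n. (h n)\<^sup>2 / \<epsilon> n) \<longlonglongrightarrow> 0"
    and scale2: "(\<lambda>n. \<epsilon> n / h n) \<longlonglongrightarrow> 0"
    and v1: "primitive v1" and v2: "primitive v2"
    and L12: "v2 \<noteq> v1" "v2 \<noteq> - v1"
    and k_def: "\<And>n. k n = lcomb (n1 n) v1 (m1 n) (rot v1)"
    and l_def: "\<And>n. l n = lcomb (n2 n) v2 (m2 n) (rot v2)"
    and kl: "\<And>n. k n \<noteq> l n"
    and k_norm: "\<And>n. inorm (k n) = 1 / h n"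
    and l_norm: "\<And>n. inorm (l n) = 1 / h n"
    and om1: "(\<lambda>n. 2 * pi * real_of_int (m1 n) * (h n)\<^sup>2 / \<epsilon> n) \<longlonglongrightarrow> \<omega>1"
    and om2: "(\<lambda>n. 2 * pi * real_of_int (m2 n) * (h n)\<^sup>2 / \<epsilon> n) \<longlonglongrightarrow> \<omega>2"
  shows
    "(\<forall>a. test_fun a \<longrightarrow>
        (\<lambda>n. dist_val (h n) (\<epsilon> n) (k n) (l n) (rot v1) a)
          \<longlonglongrightarrow> (1/2) * integral (cbox (0,0) (1,1)) (\<lambda>x. a x (\<omega>1 * Llen v1)))
   \<and> (\<forall>a. test_fun a \<longrightarrow>
        (\<lambda>n. dist_val (h n) (\<epsilon> n) (k n) (l n) (rot v2) a)
          \<longlonglongrightarrow> (1/2) * integral (cbox (0,0) (1,1)) (\<lambda>x. a x (\<omega>2 * Llen v2)))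
   \<and> (\<forall>v a. primitive v \<and> v \<noteq> rot v1 \<and> v \<noteq> - rot v1 \<and> v \<noteq> rot v2 \<and> v \<noteq> - rot v2
        \<and> test_fun a \<longrightarrow>
        (\<lambda>n. dist_val (h n) (\<epsilon> n) (k n) (l n) v a) \<longlonglongrightarrow> 0)"
proof -
  have K: "scaled_lattice_seq h \<epsilon> v1 n1 m1 k \<omega>1"
    by unfold_locales (use h_pos eps_pos scale2 v1 k_def k_norm om1 in auto)
  have L: "scaled_lattice_seq h \<epsilon> v2 n2 m2 l \<omega>2"
    by unfold_locales (use h_pos eps_pos scale2 v2 l_def l_norm om2 in auto)
  have ne: "v1 \<noteq> v2" "v1 \<noteq> - v2" and lk: "\<And>i. l i \<noteq> k i"
    using L12 kl by (auto simp: eq_commute)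
  show ?thesis
    using dist_val_rot_tendsto[OF K L L12 kl]
      dist_val_rot_tendsto[OF L K ne lk, unfolded dist_val_swap[of _ _ "l _"]]
      dist_val_tendsto_0[OF K L kl]
    by blast
qed

end
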